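(* Let $R$ be a commutative ring, $M$ a faithful primeful $R$-module having at least one prime submodule, $X=\mathrm{Spec}(M)$, and $N$ an $R$-module. For every $f\in R$, the module $\mathcal{A}(N,M)(X_f)$ is isomorphic to the localization $N_f$.
   Context: For a submodule $L$ of an $R$-module $M$, $(L:M)=\{r\in R\mid rM\subseteq L\}$. A submodule $P$ of $M$ is prime if $P\neq M$ and whenever $rm\in P$ ($r\in R$, $m\in M$) then $r\in (P:M)$ or $m\in P$. $\mathrm{Spec}(M)$ is the set of prime submodules. $M$ is faithful if $\mathrm{Ann}_R(M)=0$; primeful if $M=0$ or $\mathrm{Spec}(M)\to\mathrm{Spec}(R/\mathrm{Ann}(M))$, $P\mapsto(P:M)/\mathrm{Ann}(M)$, is surjective. For $L\le M$, $V(L)=\{P\in X\mid (P:M)\supseteq (L:M)\}$; these are the closed sets of the Zariski topology. For $r\in R$, $X_r=X\setminus V(rM)$. For open $U\subseteq X$, $\mathrm{Supp}(U)=\{(P:M)\mid P\in U\}$. $\mathcal{A}(N,M)(U)$ is the $R$-module of families $(\gamma_{\mathfrak p})_{\mathfrak p\in\mathrm{Supp}(U)}\in\prod_{\mathfrak p\in\mathrm{Supp}(U)}N_{\mathfrak p}$ such that for each $Q\in U$ there exist an open neighbourhood $W\subseteq U$ of $Q$ and $s\in R$, $m\in N$ with $s\notin(P:M)$ and $\gamma_{(P:M)}=m/s$ for every $P\in W$. $N_f$ is the localization of $N$ at $\{f^n\mid n\ge0\}$. *)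

theory Defs
  imports Main "HOL.Modules"
begin

text \<open>The ring R is the type 'a (a commutative ring with 1). An R-module is an
abelian group type together with a scalar multiplication satisfying the HOL locale module.
The module M is the whole type 'm with scalar multiplication sM, and N is the whole type 'n
with scalar multiplication sN.\<close>

definition submodule :: "('a::comm_ring_1 \<Rightarrow> 'm::ab_group_add \<Rightarrow> 'm) \<Rightarrow> 'm set \<Rightarrow> bool" where
  "submodule sM L \<longleftrightarrow> 0 \<in> L \<and> (\<forall>x\<in>L. \<forall>y\<in>L. x + y \<in> L) \<and> (\<forall>c. \<forall>x\<in>L. sM c x \<in> L)"

definition colon :: "('a::comm_ring_1 \<Rightarrow> 'm::ab_group_add \<Rightarrow> 'm) \<Rightarrow> 'm set \<Rightarrow> 'a set" where
  "colon sM L = {r. \<forall>m. sM r m \<in> L}"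

definition prime_submodule :: "('a::comm_ring_1 \<Rightarrow> 'm::ab_group_add \<Rightarrow> 'm) \<Rightarrow> 'm set \<Rightarrow> bool" where
  "prime_submodule sM P \<longleftrightarrow> submodule sM P \<and> P \<noteq> UNIV \<and>
     (\<forall>r m. sM r m \<in> P \<longrightarrow> r \<in> colon sM P \<or> m \<in> P)"

definition Spec :: "('a::comm_ring_1 \<Rightarrow> 'm::ab_group_add \<Rightarrow> 'm) \<Rightarrow> 'm set set" where
  "Spec sM = {P. prime_submodule sM P}"

definition Ann :: "('a::comm_ring_1 \<Rightarrow> 'm::ab_group_add \<Rightarrow> 'm) \<Rightarrow> 'a set" where
  "Ann sM = colon sM {0}"

definition faithful :: "('a::comm_ring_1 \<Rightarrow> 'm::ab_group_add \<Rightarrow> 'm) \<Rightarrow> bool" where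
  "faithful sM \<longleftrightarrow> Ann sM = {0}"

definition ideal :: "'a::comm_ring_1 set \<Rightarrow> bool" where
  "ideal I \<longleftrightarrow> 0 \<in> I \<and> (\<forall>x\<in>I. \<forall>y\<in>I. x + y \<in> I) \<and> (\<forall>r. \<forall>x\<in>I. r * x \<in> I)"

definition prime_ideal :: "'a::comm_ring_1 set \<Rightarrow> bool" where
  "prime_ideal p \<longleftrightarrow> ideal p \<and> p \<noteq> UNIV \<and> (\<forall>a b. a * b \<in> p \<longrightarrow> a \<in> p \<or> b \<in> p)"

text \<open>Primeful: M = 0 or the map P \<mapsto> (P:M)/Ann(M) from Spec(M) to Spec(R/Ann(M)) is surjective.
Prime ideals of R/Ann(M) are identified with the prime ideals of R containing Ann(M), the
correspondence being p \<mapsto> p/Ann(M); so surjectivity says every prime ideal p \<supseteq> Ann(M)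
equals (P:M) for some prime submodule P.\<close>
definition primeful :: "('a::comm_ring_1 \<Rightarrow> 'm::ab_group_add \<Rightarrow> 'm) \<Rightarrow> bool" where
  "primeful sM \<longleftrightarrow> (UNIV :: 'm set) = {0} \<or>
     (\<forall>p. prime_ideal p \<and> Ann sM \<subseteq> p \<longrightarrow> (\<exists>P\<in>Spec sM. colon sM P = p))"

definition V :: "('a::comm_ring_1 \<Rightarrow> 'm::ab_group_add \<Rightarrow> 'm) \<Rightarrow> 'm set \<Rightarrow> 'm set set" where
  "V sM L = {P \<in> Spec sM. colon sM P \<supseteq> colon sM L}"

definition zariski_open :: "('a::comm_ring_1 \<Rightarrow> 'm::ab_group_add \<Rightarrow> 'm) \<Rightarrow> 'm set set \<Rightarrow> bool" where
  "zariski_open sM U \<longleftrightarrow> (\<exists>L. submodule sM L \<and> U = Spec sM - V sM L)"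

definition Xr :: "('a::comm_ring_1 \<Rightarrow> 'm::ab_group_add \<Rightarrow> 'm) \<Rightarrow> 'a \<Rightarrow> 'm set set" where
  "Xr sM r = Spec sM - V sM (range (sM r))"

definition Supp :: "('a::comm_ring_1 \<Rightarrow> 'm::ab_group_add \<Rightarrow> 'm) \<Rightarrow> 'm set set \<Rightarrow> 'a set set" where
  "Supp sM U = (\<lambda>P. colon sM P) ` U"

definition loc_rel :: "'a::comm_ring_1 set \<Rightarrow> ('a \<Rightarrow> 'n::ab_group_add \<Rightarrow> 'n) \<Rightarrow> 'n \<times> 'a \<Rightarrow> 'n \<times> 'a \<Rightarrow> bool" where
  "loc_rel S sN x y \<longleftrightarrow> (\<exists>t\<in>S. sN t (sN (snd y) (fst x) - sN (snd x) (fst y)) = 0)"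

definition loc_class :: "'a::comm_ring_1 set \<Rightarrow> ('a \<Rightarrow> 'n::ab_group_add \<Rightarrow> 'n) \<Rightarrow> 'n \<times> 'a \<Rightarrow> ('n \<times> 'a) set" where
  "loc_class S sN x = {y. snd y \<in> S \<and> loc_rel S sN x y}"

definition loc_carrier :: "'a::comm_ring_1 set \<Rightarrow> ('a \<Rightarrow> 'n::ab_group_add \<Rightarrow> 'n) \<Rightarrow> ('n \<times> 'a) set set" where
  "loc_carrier S sN = {loc_class S sN (m, s) | m s. s \<in> S}"

definition loc_add :: "'a::comm_ring_1 set \<Rightarrow> ('a \<Rightarrow> 'n::ab_group_add \<Rightarrow> 'n) \<Rightarrow> ('n \<times> 'a) set \<Rightarrow> ('n \<times> 'a) set \<Rightarrow> ('n \<times> 'a) set" where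
  "loc_add S sN x y = (let (m1, s1) = (SOME z. z \<in> x); (m2, s2) = (SOME z. z \<in> y)
     in loc_class S sN (sN s2 m1 + sN s1 m2, s1 * s2))"

definition loc_scale :: "'a::comm_ring_1 set \<Rightarrow> ('a \<Rightarrow> 'n::ab_group_add \<Rightarrow> 'n) \<Rightarrow> 'a \<Rightarrow> ('n \<times> 'a) set \<Rightarrow> ('n \<times> 'a) set" where
  "loc_scale S sN r x = (let (m, s) = (SOME z. z \<in> x) in loc_class S sN (sN r m, s))"

text \<open>N_p for a prime ideal p: localization at R - p; N_f: localization at the powers of f.\<close>
abbreviation powers :: "'a::comm_ring_1 \<Rightarrow> 'a set" where
  "powers f \<equiv> range (\<lambda>n::nat. f ^ n)"

text \<open>The module A(N,M)(U) of sections: families (gamma_p)_{p \<in> Supp(U)}, represented as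
functions that are {} outside Supp(U).\<close>
definition sections :: "('a::comm_ring_1 \<Rightarrow> 'm::ab_group_add \<Rightarrow> 'm) \<Rightarrow> ('a \<Rightarrow> 'n::ab_group_add \<Rightarrow> 'n)
    \<Rightarrow> 'm set set \<Rightarrow> ('a set \<Rightarrow> ('n \<times> 'a) set) set" where
  "sections sM sN U = {\<gamma>.
     (\<forall>p. p \<notin> Supp sM U \<longrightarrow> \<gamma> p = {}) \<and>
     (\<forall>p\<in>Supp sM U. \<gamma> p \<in> loc_carrier (- p) sN) \<and>
     (\<forall>Q\<in>U. \<exists>W. zariski_open sM W \<and> Q \<in> W \<and> W \<subseteq> U \<and>
        (\<exists>s m. \<forall>P\<in>W. s \<notin> colon sM P \<and>
                 \<gamma> (colon sM P) = loc_class (- colon sM P) sN (m, s)))}"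

definition sect_add :: "('a::comm_ring_1 \<Rightarrow> 'm::ab_group_add \<Rightarrow> 'm) \<Rightarrow> ('a \<Rightarrow> 'n::ab_group_add \<Rightarrow> 'n)
    \<Rightarrow> 'm set set \<Rightarrow> ('a set \<Rightarrow> ('n \<times> 'a) set) \<Rightarrow> ('a set \<Rightarrow> ('n \<times> 'a) set) \<Rightarrow> ('a set \<Rightarrow> ('n \<times> 'a) set)" where
  "sect_add sM sN U \<gamma> \<delta> = (\<lambda>p. if p \<in> Supp sM U then loc_add (- p) sN (\<gamma> p) (\<delta> p) else {})"

definition sect_scale :: "('a::comm_ring_1 \<Rightarrow> 'm::ab_group_add \<Rightarrow> 'm) \<Rightarrow> ('a \<Rightarrow> 'n::ab_group_add \<Rightarrow> 'n)
    \<Rightarrow> 'm set set \<Rightarrow> 'a \<Rightarrow> ('a set \<Rightarrow> ('n \<times> 'a) set) \<Rightarrow> ('a set \<Rightarrow> ('n \<times> 'a) set)" where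
  "sect_scale sM sN U r \<gamma> = (\<lambda>p. if p \<in> Supp sM U then loc_scale (- p) sN r (\<gamma> p) else {})"

end

theory Submission
  imports Defs
begin

text \<open>
  Since \<open>M\<close> is faithful and primeful, \<open>P \<mapsto> (P:M)\<close> maps \<open>X\<^sub>f\<close> onto
  \<open>D(f) = {p prime. f \<notin> p}\<close>, and every open neighbourhood in \<open>X\<close> contains a basic open set
  \<open>X\<^sub>g\<close>. So a section over \<open>X\<^sub>f\<close> is a family of germs over \<open>D(f)\<close> that is locally a
  fraction, and the map sending \<open>m/f\<^sup>n \<in> N\<^sub>f\<close> to its germs is compatible with addition and
  scaling. It is injective because an element of \<open>N\<close> that vanishes in every \<open>N\<^sub>p\<close>,
  \<open>p \<in> D(f)\<close>, is killed by a power of \<open>f\<close> (\<open>f\<close> lies in the radical of its annihilator).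
  Surjectivity is the classical argument for the structure sheaf on \<open>D(f)\<close>: by quasi-compactness
  finitely many local fractions \<open>a\<^sub>i/h\<^sub>i\<close> suffice; after raising the \<open>h\<^sub>i\<close> to a common
  power they satisfy \<open>h\<^sub>j a\<^sub>i = h\<^sub>i a\<^sub>j\<close> exactly, and writing \<open>f\<^sup>e = \<Sum> r\<^sub>i h\<^sub>i\<close>, the element
  \<open>(\<Sum> r\<^sub>i a\<^sub>i)/f\<^sup>e\<close> has all the prescribed germs.
\<close>

section \<open>Prime ideals of a commutative ring\<close>

interpretation ring_module: module "(*) :: 'a::comm_ring_1 \<Rightarrow> 'a \<Rightarrow> 'a"
  by standard (simp_all add: algebra_simps)

declare ring_module.scale_scale [simp del] \<comment> \<open>it would undo \<open>mult.assoc\<close> and loop\<close>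

lemma ideal_iff_subspace: "ideal I \<longleftrightarrow> ring_module.subspace I"
  unfolding ideal_def ring_module.subspace_def by auto

lemma prime_ideal_one_notin:
  assumes "prime_ideal p" shows "1 \<notin> p"
proof
  assume "1 \<in> p"
  then have "r * 1 \<in> p" for r using assms unfolding prime_ideal_def ideal_def by blast
  with assms show False unfolding prime_ideal_def by auto
qed

lemma prime_ideal_mult_iff:
  assumes "prime_ideal p" shows "a * b \<in> p \<longleftrightarrow> a \<in> p \<or> b \<in> p"
proof -
  have "r * x \<in> p" if "x \<in> p" for r x using assms that unfolding prime_ideal_def ideal_def by blast
  then have "a \<in> p \<or> b \<in> p \<Longrightarrow> a * b \<in> p" by (metis mult.commute)
  with assms show ?thesis unfolding prime_ideal_def by blast
qed

lemma prime_ideal_power_notin: "prime_ideal p \<Longrightarrow> f \<notin> p \<Longrightarrow> f ^ n \<notin> p"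
  by (induction n) (simp_all add: prime_ideal_one_notin prime_ideal_mult_iff)

lemma prime_ideal_power_Suc_iff: "prime_ideal p \<Longrightarrow> f ^ Suc n \<in> p \<longleftrightarrow> f \<in> p"
  by (induction n) (simp_all add: prime_ideal_mult_iff)

lemma ideal_Union_chain:
  assumes "C \<noteq> {}" and "\<forall>J\<in>C. ideal J" and chain: "\<forall>X\<in>C. \<forall>Y\<in>C. X \<subseteq> Y \<or> Y \<subseteq> X"
  shows "ideal (\<Union>C)"
  unfolding ideal_def
proof (intro conjI ballI allI)
  show "0 \<in> \<Union>C" using assms(1,2) by (auto simp: ideal_def)
next
  fix x y assume "x \<in> \<Union>C" "y \<in> \<Union>C"
  then obtain X Y where XY: "X \<in> C" "Y \<in> C" "x \<in> X" "y \<in> Y" by blast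
  then have "ideal X" "ideal Y" using assms(2) by auto
  moreover have "X \<subseteq> Y \<or> Y \<subseteq> X" using chain XY(1,2) by blast
  ultimately have "x + y \<in> X \<or> x + y \<in> Y" using XY(3,4) unfolding ideal_def by blast
  then show "x + y \<in> \<Union>C" using XY(1,2) by blast
next
  fix r x assume "x \<in> \<Union>C"
  with assms(2) show "r * x \<in> \<Union>C" unfolding ideal_def by blast
qed

lemma prime_ideal_if_maximal_avoiding_powers:
  fixes P :: "'a::comm_ring_1 set"
  assumes "ideal P" and avoid: "\<forall>n. f ^ n \<notin> P"
    and maximal: "\<And>J. ideal J \<Longrightarrow> P \<subseteq> J \<Longrightarrow> \<forall>n. f ^ n \<notin> J \<Longrightarrow> J = P"
  shows "prime_ideal P"
proof -
  have P: "ring_module.subspace P" using assms(1) by (simp add: ideal_iff_subspace)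
  have enlarge: "\<exists>n x. f ^ n - x * a \<in> P" if "a \<notin> P" for a
  proof -
    let ?J = "ring_module.span (insert a P)"
    have "P \<subseteq> ?J" "a \<in> ?J" by (auto intro: ring_module.span_base)
    with that maximal obtain n where "f ^ n \<in> ?J"
      by (metis ideal_iff_subspace ring_module.subspace_span)
    then show ?thesis
      using ring_module.span_eq_iff[THEN iffD2, OF P] by (auto simp: ring_module.span_breakdown_eq)
  qed
  have "a \<in> P \<or> b \<in> P" if ab: "a * b \<in> P" for a b
  proof (rule ccontr)
    assume "\<not> (a \<in> P \<or> b \<in> P)"
    then obtain n x k y where a: "f ^ n - x * a \<in> P" and b: "f ^ k - y * b \<in> P"
      using enlarge by blast
    have "f ^ n * (f ^ k - y * b) \<in> P" "(y * b) * (f ^ n - x * a) \<in> P" "(x * y) * (a * b) \<in> P"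
      using ring_module.subspace_scale[OF P] a b ab by blast+
    then have "f ^ n * (f ^ k - y * b) + (y * b) * (f ^ n - x * a) + (x * y) * (a * b) \<in> P"
      by (simp add: ring_module.subspace_add[OF P])
    also have "f ^ n * (f ^ k - y * b) + (y * b) * (f ^ n - x * a) + (x * y) * (a * b) = f ^ (n + k)"
      by (simp add: power_add algebra_simps)
    finally show False using avoid by blast
  qed
  moreover have "P \<noteq> UNIV" using avoid by blast
  ultimately show ?thesis using assms(1) unfolding prime_ideal_def by blast
qed

lemma prime_ideal_avoiding_powers:
  fixes I :: "'a::comm_ring_1 set"
  assumes I: "ideal I" and avoid: "\<forall>n. f ^ n \<notin> I"
  shows "\<exists>p. prime_ideal p \<and> I \<subseteq> p \<and> f \<notin> p"
proof -
  define A where "A = {J. ideal J \<and> I \<subseteq> J \<and> (\<forall>n. f ^ n \<notin> J)}"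
  have "\<forall>C\<in>chains A. \<exists>U\<in>A. \<forall>X\<in>C. X \<subseteq> U"
  proof
    fix C assume "C \<in> chains A"
    then have CA: "C \<subseteq> A" and chain: "\<forall>X\<in>C. \<forall>Y\<in>C. X \<subseteq> Y \<or> Y \<subseteq> X"
      by (auto simp: chains_def chain_subset_def)
    show "\<exists>U\<in>A. \<forall>X\<in>C. X \<subseteq> U"
    proof (cases "C = {}")
      case True
      with I avoid show ?thesis by (auto simp: A_def)
    next
      case False
      with CA chain have "ideal (\<Union>C)" by (intro ideal_Union_chain) (auto simp: A_def)
      with False CA show ?thesis by (intro bexI[of _ "\<Union>C"]) (auto simp: A_def)
    qed
  qed
  then obtain P where "P \<in> A" and maximal: "\<forall>J\<in>A. P \<subseteq> J \<longrightarrow> J = P"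
    using Zorn_Lemma2 by blast
  then have "prime_ideal P" "I \<subseteq> P" "\<forall>n. f ^ n \<notin> P"
    by (auto simp: A_def intro!: prime_ideal_if_maximal_avoiding_powers)
  then show ?thesis by (metis power_one_right)
qed

lemma power_in_ideal_if_in_all_primes:
  fixes I :: "'a::comm_ring_1 set"
  assumes "ideal I" and "\<And>p. prime_ideal p \<Longrightarrow> I \<subseteq> p \<Longrightarrow> f \<in> p"
  shows "\<exists>n. f ^ n \<in> I"
  using prime_ideal_avoiding_powers[OF assms(1), of f] assms(2) by blast

text \<open>Quasi-compactness of \<open>D(f)\<close>.\<close>

lemma power_eq_finite_combination:
  fixes f :: "'a::comm_ring_1"
  assumes cover: "\<And>p. prime_ideal p \<Longrightarrow> f \<notin> p \<Longrightarrow> \<exists>i\<in>I. h i \<notin> p"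
  shows "\<exists>T r e. finite T \<and> T \<subseteq> I \<and> f ^ e = (\<Sum>i\<in>T. r i * h i)"
proof -
  have "f \<in> p" if "prime_ideal p" "ring_module.span (h ` I) \<subseteq> p" for p
    using cover[OF that(1)] that(2) ring_module.span_base by blast
  then obtain e where "f ^ e \<in> ring_module.span (h ` I)"
    using power_in_ideal_if_in_all_primes ideal_iff_subspace by blast
  then obtain S r where S: "finite S" "S \<subseteq> h ` I" "f ^ e = (\<Sum>v\<in>S. r v * v)"
    unfolding ring_module.span_explicit by blast
  then obtain T where T: "T \<subseteq> I" "inj_on h T" "S = h ` T"
    using subset_image_inj by meson
  have "f ^ e = (\<Sum>i\<in>T. r (h i) * h i)"
    using S(3) unfolding T(3) sum.reindex[OF T(2)] by simp
  moreover have "finite T" using S(1) T(2,3) by (simp add: finite_image_iff)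
  ultimately show ?thesis
    using T(1) by (intro exI[of _ T] exI[of _ "\<lambda>i. r (h i)"] exI[of _ e]) simp
qed

lemma finite_combination_avoids_prime:
  fixes f :: "'a::comm_ring_1"
  assumes "f ^ e = (\<Sum>i\<in>T. r i * h i)" and "prime_ideal p" "f \<notin> p"
  shows "\<exists>i\<in>T. h i \<notin> p"
proof (rule ccontr)
  assume "\<not> ?thesis"
  moreover have "ring_module.subspace p" using assms(2) by (simp add: prime_ideal_def ideal_iff_subspace)
  ultimately have "f ^ e \<in> p" unfolding assms(1)
    by (auto intro!: ring_module.subspace_sum ring_module.subspace_scale)
  with assms(2,3) show False using prime_ideal_power_notin by blast
qed

definition multiplicative :: "'a::comm_ring_1 set \<Rightarrow> bool" where
  "multiplicative S \<longleftrightarrow> 1 \<in> S \<and> (\<forall>x\<in>S. \<forall>y\<in>S. x * y \<in> S)"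

lemma multiplicative_compl_prime: "prime_ideal p \<Longrightarrow> multiplicative (- p)"
  unfolding multiplicative_def using prime_ideal_one_notin prime_ideal_mult_iff by auto

lemma multiplicative_powers: "multiplicative (powers f)"
  unfolding multiplicative_def by (auto simp: power_add[symmetric] intro: range_eqI[of _ _ 0])

lemma powers_subset_compl_prime: "prime_ideal p \<Longrightarrow> f \<notin> p \<Longrightarrow> powers f \<subseteq> - p"
  using prime_ideal_power_notin by blast

section \<open>Localization\<close>

context module
begin

lemma loc_rel_refl: "1 \<in> S \<Longrightarrow> loc_rel S scale x x"
  unfolding loc_rel_def by (intro bexI[of _ 1]) simp_all

lemma loc_rel_sym: "loc_rel S scale x y \<Longrightarrow> loc_rel S scale y x"
  unfolding loc_rel_def by (metis minus_diff_eq scale_minus_right neg_equal_0_iff_equal)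

lemma loc_rel_trans:
  assumes S: "multiplicative S" and "snd y \<in> S"
    and "loc_rel S scale x y" and "loc_rel S scale y z"
  shows "loc_rel S scale x z"
proof -
  obtain t u where t: "t \<in> S" "t *s (snd y *s fst x - snd x *s fst y) = 0"
    and u: "u \<in> S" "u *s (snd z *s fst y - snd y *s fst z) = 0"
    using assms(3,4) unfolding loc_rel_def by blast
  have "(t * u * snd y) *s (snd z *s fst x - snd x *s fst z)
      = (u * snd z) *s (t *s (snd y *s fst x - snd x *s fst y))
        + (t * snd x) *s (u *s (snd z *s fst y - snd y *s fst z))"
    by (simp add: scale_right_diff_distrib scale_right_distrib mult_ac)
  also have "\<dots> = 0" using t u by simp
  finally show ?thesis
    using S t(1) u(1) \<open>snd y \<in> S\<close> unfolding loc_rel_def multiplicative_def by blast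
qed

lemma loc_rel_mono: "S \<subseteq> T \<Longrightarrow> loc_rel S scale x y \<Longrightarrow> loc_rel T scale x y"
  unfolding loc_rel_def by blast

lemma loc_class_self: "multiplicative S \<Longrightarrow> snd x \<in> S \<Longrightarrow> x \<in> loc_class S scale x"
  unfolding loc_class_def multiplicative_def using loc_rel_refl by blast

lemma loc_class_eq_iff:
  assumes S: "multiplicative S" and "snd x \<in> S" "snd y \<in> S"
  shows "loc_class S scale x = loc_class S scale y \<longleftrightarrow> loc_rel S scale x y"
proof
  assume "loc_class S scale x = loc_class S scale y"
  then have "y \<in> loc_class S scale x" using loc_class_self[OF S assms(3)] by simp
  then show "loc_rel S scale x y" unfolding loc_class_def by simp
next
  assume "loc_rel S scale x y"
  then show "loc_class S scale x = loc_class S scale y"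
    unfolding loc_class_def using loc_rel_trans[OF S] loc_rel_sym assms(2,3) by blast
qed

lemma loc_class_eqI:
  assumes "multiplicative S" "s \<in> S" "t \<in> S" and "t *s m = s *s n"
  shows "loc_class S scale (m, s) = loc_class S scale (n, t)"
proof -
  have "loc_rel S scale (m, s) (n, t)"
    using assms unfolding loc_rel_def multiplicative_def by (intro bexI[of _ 1]) simp_all
  with assms(1-3) show ?thesis by (simp add: loc_class_eq_iff)
qed

lemma loc_class_in_carrier: "snd x \<in> S \<Longrightarrow> loc_class S scale x \<in> loc_carrier S scale"
  unfolding loc_carrier_def by (cases x) auto

lemma loc_carrier_cases:
  assumes "c \<in> loc_carrier S scale"
  obtains z where "snd z \<in> S" "c = loc_class S scale z"
  using assms unfolding loc_carrier_def by auto

lemma loc_class_some: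
  assumes S: "multiplicative S" and "snd x \<in> S"
  shows "snd (SOME z. z \<in> loc_class S scale x) \<in> S"
    and "loc_rel S scale (SOME z. z \<in> loc_class S scale x) x"
proof -
  have "(SOME z. z \<in> loc_class S scale x) \<in> loc_class S scale x"
    using loc_class_self[OF assms] by (rule someI)
  then show "snd (SOME z. z \<in> loc_class S scale x) \<in> S"
    and "loc_rel S scale (SOME z. z \<in> loc_class S scale x) x"
    unfolding loc_class_def by (auto intro: loc_rel_sym)
qed

lemma loc_rel_add:
  assumes "loc_rel S scale x y"
  shows "loc_rel S scale (snd z *s fst x + snd x *s fst z, snd x * snd z)
                          (snd z *s fst y + snd y *s fst z, snd y * snd z)"
proof -
  obtain t where t: "t \<in> S" "t *s (snd y *s fst x - snd x *s fst y) = 0"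
    using assms unfolding loc_rel_def by blast
  have "t *s ((snd y * snd z) *s (snd z *s fst x + snd x *s fst z)
          - (snd x * snd z) *s (snd z *s fst y + snd y *s fst z))
     = (snd z * snd z) *s (t *s (snd y *s fst x - snd x *s fst y))"
    by (simp add: scale_right_diff_distrib scale_right_distrib mult_ac)
  with t show ?thesis unfolding loc_rel_def by auto
qed

lemma loc_add_class:
  assumes S: "multiplicative S" and "snd x \<in> S" "snd y \<in> S"
  shows "loc_add S scale (loc_class S scale x) (loc_class S scale y) =
         loc_class S scale (snd y *s fst x + snd x *s fst y, snd x * snd y)"
proof -
  define x' where "x' = (SOME z. z \<in> loc_class S scale x)"
  define y' where "y' = (SOME z. z \<in> loc_class S scale y)"
  have x': "snd x' \<in> S" "loc_rel S scale x' x" and y': "snd y' \<in> S" "loc_rel S scale y' y"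
    using loc_class_some[OF S assms(2)] loc_class_some[OF S assms(3)] by (auto simp: x'_def y'_def)
  have closed: "a * b \<in> S" if "a \<in> S" "b \<in> S" for a b
    using S that unfolding multiplicative_def by blast
  have "loc_add S scale (loc_class S scale x) (loc_class S scale y)
      = loc_class S scale (snd y' *s fst x' + snd x' *s fst y', snd x' * snd y')"
    unfolding loc_add_def x'_def[symmetric] y'_def[symmetric] by (simp add: case_prod_beta)
  also have "\<dots> = loc_class S scale (snd y' *s fst x + snd x *s fst y', snd x * snd y')"
    using loc_rel_add[OF x'(2), of y'] x' y' assms closed by (simp add: loc_class_eq_iff)
  also have "\<dots> = loc_class S scale (snd x *s fst y' + snd y' *s fst x, snd y' * snd x)"
    by (simp add: add.commute mult.commute)
  also have "\<dots> = loc_class S scale (snd x *s fst y + snd y *s fst x, snd y * snd x)"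
    using loc_rel_add[OF y'(2), of x] x' y' assms closed by (simp add: loc_class_eq_iff)
  finally show ?thesis by (simp add: add.commute mult.commute)
qed

lemma loc_scale_class:
  assumes S: "multiplicative S" and "snd x \<in> S"
  shows "loc_scale S scale r (loc_class S scale x) = loc_class S scale (r *s fst x, snd x)"
proof -
  define x' where "x' = (SOME z. z \<in> loc_class S scale x)"
  have x': "snd x' \<in> S" "loc_rel S scale x' x"
    using loc_class_some[OF S assms(2)] by (auto simp: x'_def)
  then obtain t where t: "t \<in> S" "t *s (snd x *s fst x' - snd x' *s fst x) = 0"
    unfolding loc_rel_def by blast
  have "t *s (snd x *s (r *s fst x') - snd x' *s (r *s fst x))
      = r *s (t *s (snd x *s fst x' - snd x' *s fst x))"
    by (simp add: scale_right_diff_distrib mult_ac)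
  with t have "loc_rel S scale (r *s fst x', snd x') (r *s fst x, snd x)"
    unfolding loc_rel_def by auto
  with x' assms have "loc_class S scale (r *s fst x', snd x') = loc_class S scale (r *s fst x, snd x)"
    by (simp add: loc_class_eq_iff)
  then show ?thesis unfolding loc_scale_def x'_def[symmetric] by (simp add: case_prod_beta)
qed

lemma power_annihilates_if_locally_zero:
  assumes "\<And>p. prime_ideal p \<Longrightarrow> g \<notin> p \<Longrightarrow> \<exists>t. t \<notin> p \<and> t *s x = 0"
  shows "\<exists>n. g ^ n *s x = 0"
proof -
  have "ideal {t. t *s x = 0}"
    unfolding ideal_def by (simp add: scale_left_distrib flip: scale_scale)
  moreover have "g \<in> p" if "prime_ideal p" "{t. t *s x = 0} \<subseteq> p" for p
    using assms[OF that(1)] that(2) by blast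
  ultimately show ?thesis using power_in_ideal_if_in_all_primes by fastforce
qed

lemma common_annihilating_power:
  assumes "finite I" and "\<forall>i\<in>I. \<exists>n. c i ^ n *s x i = 0"
  shows "\<exists>n. \<forall>i\<in>I. c i ^ n *s x i = 0"
proof -
  from assms(2) obtain k where k: "\<forall>i\<in>I. c i ^ k i *s x i = 0" by metis
  have "c i ^ (\<Sum>j\<in>I. k j) *s x i = 0" if "i \<in> I" for i
  proof -
    have "k i \<le> (\<Sum>j\<in>I. k j)" using assms(1) that by (simp add: member_le_sum)
    then have "c i ^ (\<Sum>j\<in>I. k j) = c i ^ ((\<Sum>j\<in>I. k j) - k i) * c i ^ k i"
      by (simp flip: power_add)
    then show ?thesis using k that by (simp flip: scale_scale)
  qed
  then show ?thesis by blast
qed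

end

section \<open>The Zariski topology on Spec M\<close>

lemma prime_ideal_colon:
  assumes "module sM" and "P \<in> Spec sM"
  shows "prime_ideal (colon sM P)"
proof -
  interpret M: module sM by fact
  have sub: "submodule sM P" and "P \<noteq> UNIV"
    and prime: "\<And>r m. sM r m \<in> P \<Longrightarrow> r \<in> colon sM P \<or> m \<in> P"
    using assms(2) unfolding Spec_def prime_submodule_def by auto
  have "ideal (colon sM P)"
    using sub unfolding ideal_def colon_def submodule_def by (simp add: M.scale_left_distrib flip: M.scale_scale)
  moreover have "1 \<notin> colon sM P" using \<open>P \<noteq> UNIV\<close> unfolding colon_def by auto
  moreover have "a \<in> colon sM P \<or> b \<in> colon sM P" if "a * b \<in> colon sM P" for a b
  proof -
    have "sM a (sM b m) \<in> P" for m using that unfolding colon_def by simp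
    then show ?thesis using prime unfolding colon_def by blast
  qed
  ultimately show ?thesis unfolding prime_ideal_def by blast
qed

lemma Xr_eq:
  assumes "module sM"
  shows "Xr sM g = {P \<in> Spec sM. g \<notin> colon sM P}"
proof -
  interpret M: module sM by fact
  have "colon sM (range (sM g)) \<subseteq> colon sM P \<longleftrightarrow> g \<in> colon sM P" for P
  proof
    assume "colon sM (range (sM g)) \<subseteq> colon sM P"
    moreover have "g \<in> colon sM (range (sM g))" unfolding colon_def by simp
    ultimately show "g \<in> colon sM P" by blast
  next
    assume g: "g \<in> colon sM P"
    show "colon sM (range (sM g)) \<subseteq> colon sM P"
    proof
      fix r assume r: "r \<in> colon sM (range (sM g))"
      have "sM r m \<in> P" for m
      proof -
        obtain m' where "sM r m = sM g m'" using r unfolding colon_def by blast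
        with g show ?thesis unfolding colon_def by simp
      qed
      then show "r \<in> colon sM P" unfolding colon_def by blast
    qed
  qed
  then show ?thesis unfolding Xr_def V_def by blast
qed

lemma zariski_open_Xr:
  assumes "module sM"
  shows "zariski_open sM (Xr sM g)"
proof -
  interpret M: module sM by fact
  have "0 \<in> range (sM g)" by (rule range_eqI[of _ _ 0]) simp
  moreover have "sM g a + sM g b \<in> range (sM g)" for a b by (simp flip: M.scale_right_distrib)
  moreover have "sM c (sM g a) \<in> range (sM g)" for c a by (metis M.scale_left_commute rangeI)
  ultimately have "submodule sM (range (sM g))" unfolding submodule_def by blast
  then show ?thesis unfolding zariski_open_def Xr_def by blast
qed

lemma zariski_open_basic:
  assumes "module sM" and "zariski_open sM W" and "Q \<in> W"
  obtains g where "g \<notin> colon sM Q" and "Xr sM g \<subseteq> W"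
proof -
  obtain L where L: "W = Spec sM - V sM L" using assms(2) unfolding zariski_open_def by blast
  with assms(3) obtain g where "g \<in> colon sM L" "g \<notin> colon sM Q" unfolding V_def by auto
  moreover from this(1) have "Xr sM g \<subseteq> W" unfolding Xr_eq[OF assms(1)] L V_def by blast
  ultimately show ?thesis using that by blast
qed

lemma prime_ideal_is_colon:
  assumes "module sM" "faithful sM" "primeful sM" and "prime_ideal p"
  obtains P where "P \<in> Spec sM" "colon sM P = p"
proof -
  interpret M: module sM by fact
  have "1 \<notin> Ann sM" using \<open>faithful sM\<close> unfolding faithful_def by simp
  then have "(UNIV :: 'b set) \<noteq> {0}" unfolding Ann_def colon_def by auto
  moreover have "Ann sM \<subseteq> p"
    using assms(2,4) unfolding faithful_def prime_ideal_def ideal_def by simp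
  ultimately show ?thesis using assms(3,4) that unfolding primeful_def by blast
qed

lemma Supp_Xr:
  assumes "module sM" "faithful sM" "primeful sM"
  shows "Supp sM (Xr sM f) = {p. prime_ideal p \<and> f \<notin> p}"
proof
  show "Supp sM (Xr sM f) \<subseteq> {p. prime_ideal p \<and> f \<notin> p}"
    unfolding Supp_def Xr_eq[OF assms(1)] using prime_ideal_colon[OF assms(1)] by auto
  show "{p. prime_ideal p \<and> f \<notin> p} \<subseteq> Supp sM (Xr sM f)"
    unfolding Supp_def Xr_eq[OF assms(1)] using prime_ideal_is_colon[OF assms] by blast
qed

section \<open>Sections over \<open>X\<^sub>f\<close>\<close>

definition germs ::
    "('a::comm_ring_1 \<Rightarrow> 'n::ab_group_add \<Rightarrow> 'n) \<Rightarrow> 'a \<Rightarrow> ('n \<times> 'a) set \<Rightarrow> 'a set \<Rightarrow> ('n \<times> 'a) set"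
  where
  "germs sN f c = (\<lambda>p. if prime_ideal p \<and> f \<notin> p then loc_class (- p) sN (SOME z. z \<in> c) else {})"

lemma germs_class:
  assumes "module sN" and "snd z \<in> powers f"
  shows "germs sN f (loc_class (powers f) sN z) p =
    (if prime_ideal p \<and> f \<notin> p then loc_class (- p) sN z else {})"
proof (cases "prime_ideal p \<and> f \<notin> p")
  case True
  interpret N: module sN by fact
  let ?z = "SOME y. y \<in> loc_class (powers f) sN z"
  have sub: "powers f \<subseteq> - p" using True powers_subset_compl_prime by blast
  have "snd ?z \<in> powers f" "loc_rel (powers f) sN ?z z"
    using N.loc_class_some[OF multiplicative_powers assms(2)] by auto
  with sub assms(2) True have "loc_class (- p) sN ?z = loc_class (- p) sN z"
    using N.loc_rel_mono[OF sub] by (subst N.loc_class_eq_iff[OF multiplicative_compl_prime]) auto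
  with True show ?thesis unfolding germs_def by simp
qed (auto simp: germs_def)

lemma germs_in_sections:
  assumes "module sM" "module sN" "faithful sM" "primeful sM"
    and "c \<in> loc_carrier (powers f) sN"
  shows "germs sN f c \<in> sections sM sN (Xr sM f)"
proof -
  interpret N: module sN by fact
  obtain m i where c: "c = loc_class (powers f) sN (m, f ^ i)"
    using assms(5) by (auto elim: N.loc_carrier_cases)
  have germ: "germs sN f c p = loc_class (- p) sN (m, f ^ i)" if "prime_ideal p" "f \<notin> p" for p
    using germs_class[OF assms(2)] that unfolding c by simp
  have in_Xr: "prime_ideal (colon sM P)" "f \<notin> colon sM P" if "P \<in> Xr sM f" for P
    using that prime_ideal_colon[OF assms(1)] by (auto simp: Xr_eq[OF assms(1)])
  show ?thesis
    unfolding sections_def Supp_Xr[OF assms(1,3,4)]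
  proof (intro CollectI conjI allI impI ballI)
    fix p assume "p \<notin> {p. prime_ideal p \<and> f \<notin> p}"
    then show "germs sN f c p = {}" unfolding germs_def by auto
  next
    fix p assume "p \<in> {p. prime_ideal p \<and> f \<notin> p}"
    then show "germs sN f c p \<in> loc_carrier (- p) sN"
      by (simp add: germ prime_ideal_power_notin N.loc_class_in_carrier)
  next
    fix Q assume "Q \<in> Xr sM f"
    moreover have "\<forall>P\<in>Xr sM f. f ^ i \<notin> colon sM P \<and>
        germs sN f c (colon sM P) = loc_class (- colon sM P) sN (m, f ^ i)"
      using in_Xr germ prime_ideal_power_notin by blast
    ultimately show "\<exists>W. zariski_open sM W \<and> Q \<in> W \<and> W \<subseteq> Xr sM f \<and>
        (\<exists>s m. \<forall>P\<in>W. s \<notin> colon sM P \<and> germs sN f c (colon sM P) = loc_class (- colon sM P) sN (m, s))"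
      using zariski_open_Xr[OF assms(1)] by blast
  qed
qed

lemma inj_on_germs:
  assumes "module sN"
  shows "inj_on (germs sN f) (loc_carrier (powers f) sN)"
proof
  interpret N: module sN by fact
  fix c d assume "c \<in> loc_carrier (powers f) sN" "d \<in> loc_carrier (powers f) sN"
    and eq: "germs sN f c = germs sN f d"
  then obtain x y where x: "snd x \<in> powers f" "c = loc_class (powers f) sN x"
    and y: "snd y \<in> powers f" "d = loc_class (powers f) sN y"
    by (meson N.loc_carrier_cases)
  have "\<exists>t. t \<notin> p \<and> sN t (sN (snd y) (fst x) - sN (snd x) (fst y)) = 0"
    if p: "prime_ideal p" "f \<notin> p" for p
  proof -
    have "loc_class (- p) sN x = loc_class (- p) sN y"
      using eq p germs_class[OF assms x(1)] germs_class[OF assms y(1)] unfolding x(2) y(2) by metis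
    then have "loc_rel (- p) sN x y"
      using x(1) y(1) powers_subset_compl_prime[OF p] N.loc_class_eq_iff[OF multiplicative_compl_prime[OF p(1)]]
      by blast
    then show ?thesis unfolding loc_rel_def by auto
  qed
  then obtain n where "sN (f ^ n) (sN (snd y) (fst x) - sN (snd x) (fst y)) = 0"
    using N.power_annihilates_if_locally_zero by blast
  then have "loc_rel (powers f) sN x y" unfolding loc_rel_def by blast
  then show "c = d"
    unfolding x(2) y(2) using x(1) y(1) by (simp add: N.loc_class_eq_iff[OF multiplicative_powers])
qed

lemma germs_add:
  assumes "module sM" "module sN" "faithful sM" "primeful sM"
    and "c \<in> loc_carrier (powers f) sN" "d \<in> loc_carrier (powers f) sN"
  shows "loc_add (powers f) sN c d \<in> loc_carrier (powers f) sN"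
    and "germs sN f (loc_add (powers f) sN c d) = sect_add sM sN (Xr sM f) (germs sN f c) (germs sN f d)"
proof -
  interpret N: module sN by fact
  obtain x y where x: "snd x \<in> powers f" "c = loc_class (powers f) sN x"
    and y: "snd y \<in> powers f" "d = loc_class (powers f) sN y"
    using assms(5,6) by (meson N.loc_carrier_cases)
  define w where "w = (sN (snd y) (fst x) + sN (snd x) (fst y), snd x * snd y)"
  have w: "snd w \<in> powers f"
    using x(1) y(1) unfolding w_def by (auto simp flip: power_add)
  have sum: "loc_add S sN (loc_class S sN x) (loc_class S sN y) = loc_class S sN w"
    if "multiplicative S" "powers f \<subseteq> S" for S
    unfolding w_def using that x(1) y(1) by (intro N.loc_add_class) auto
  show "loc_add (powers f) sN c d \<in> loc_carrier (powers f) sN"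
    unfolding x(2) y(2) sum[OF multiplicative_powers order_refl] using w by (rule N.loc_class_in_carrier)
  show "germs sN f (loc_add (powers f) sN c d) = sect_add sM sN (Xr sM f) (germs sN f c) (germs sN f d)"
    unfolding x(2) y(2) sum[OF multiplicative_powers order_refl] sect_add_def Supp_Xr[OF assms(1,3,4)]
    by (auto simp: fun_eq_iff germs_class[OF assms(2)] x(1) y(1) w sum multiplicative_compl_prime powers_subset_compl_prime)
qed

lemma germs_scale:
  assumes "module sM" "module sN" "faithful sM" "primeful sM"
    and "c \<in> loc_carrier (powers f) sN"
  shows "loc_scale (powers f) sN r c \<in> loc_carrier (powers f) sN"
    and "germs sN f (loc_scale (powers f) sN r c) = sect_scale sM sN (Xr sM f) r (germs sN f c)"
proof -
  interpret N: module sN by fact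
  obtain x where x: "snd x \<in> powers f" "c = loc_class (powers f) sN x"
    using assms(5) by (meson N.loc_carrier_cases)
  have scale: "loc_scale S sN r (loc_class S sN x) = loc_class S sN (sN r (fst x), snd x)"
    if "multiplicative S" "powers f \<subseteq> S" for S
    using that x(1) by (intro N.loc_scale_class) auto
  show "loc_scale (powers f) sN r c \<in> loc_carrier (powers f) sN"
    unfolding x(2) scale[OF multiplicative_powers order_refl] using x(1) by (intro N.loc_class_in_carrier) simp
  show "germs sN f (loc_scale (powers f) sN r c) = sect_scale sM sN (Xr sM f) r (germs sN f c)"
    unfolding x(2) scale[OF multiplicative_powers order_refl] sect_scale_def Supp_Xr[OF assms(1,3,4)]
    by (auto simp: fun_eq_iff germs_class[OF assms(2)] x(1) scale multiplicative_compl_prime powers_subset_compl_prime)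
qed

definition is_frac_on ::
    "('a::comm_ring_1 \<Rightarrow> 'n::ab_group_add \<Rightarrow> 'n) \<Rightarrow> 'a \<Rightarrow> ('a set \<Rightarrow> ('n \<times> 'a) set) \<Rightarrow> 'a \<Rightarrow> 'n \<Rightarrow> bool"
  where
  "is_frac_on sN f \<gamma> h a \<longleftrightarrow>
     (\<forall>p. prime_ideal p \<and> h \<notin> p \<longrightarrow> f \<notin> p \<and> \<gamma> p = loc_class (- p) sN (a, h))"

lemma is_frac_on_power_denominator:
  assumes "module sN"
    and local: "\<forall>p. prime_ideal p \<and> g \<notin> p \<longrightarrow>
                  f \<notin> p \<and> s \<notin> p \<and> \<gamma> p = loc_class (- p) sN (m, s)"
  shows "\<exists>k a. is_frac_on sN f \<gamma> (g ^ Suc k) a"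
proof -
  interpret N: module sN by fact
  have "g \<in> p" if "prime_ideal p" "ring_module.span {s} \<subseteq> p" for p
    using local that ring_module.span_base by blast
  then obtain k where "g ^ k \<in> ring_module.span {s}"
    using power_in_ideal_if_in_all_primes ideal_iff_subspace by blast
  then obtain c where c: "g ^ k = c * s" unfolding ring_module.span_singleton by blast
  \<comment> \<open>hence \<open>m/s = (g c m)/g\<^sup>k\<^sup>+\<^sup>1\<close> wherever \<open>g\<close> is invertible\<close>
  have "is_frac_on sN f \<gamma> (g ^ Suc k) (sN (g * c) m)"
    unfolding is_frac_on_def
  proof (intro allI impI)
    fix p assume p: "prime_ideal p \<and> g ^ Suc k \<notin> p"
    then have "g \<notin> p" using prime_ideal_power_Suc_iff by blast
    with p local have "f \<notin> p" "s \<notin> p" "\<gamma> p = loc_class (- p) sN (m, s)" by auto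
    moreover have "loc_class (- p) sN (m, s) = loc_class (- p) sN (sN (g * c) m, g ^ Suc k)"
      using p \<open>s \<notin> p\<close> c
      by (intro N.loc_class_eqI[OF multiplicative_compl_prime]) (simp_all add: mult_ac)
    ultimately show "f \<notin> p \<and> \<gamma> p = loc_class (- p) sN (sN (g * c) m, g ^ Suc k)" by simp
  qed
  then show ?thesis by blast
qed

lemma sections_locally_frac:
  assumes "module sM" "module sN" "faithful sM" "primeful sM"
    and "\<gamma> \<in> sections sM sN (Xr sM f)" and "prime_ideal q" "f \<notin> q"
  shows "\<exists>h a. h \<notin> q \<and> is_frac_on sN f \<gamma> h a"
proof -
  obtain Q where Q: "Q \<in> Spec sM" "colon sM Q = q"
    using prime_ideal_is_colon[OF assms(1,3,4,6)] by blast
  with assms(7) have "Q \<in> Xr sM f" by (simp add: Xr_eq[OF assms(1)])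
  then obtain W s m where W: "zariski_open sM W" "Q \<in> W" "W \<subseteq> Xr sM f"
    and on_W: "\<forall>P\<in>W. s \<notin> colon sM P \<and> \<gamma> (colon sM P) = loc_class (- colon sM P) sN (m, s)"
    using assms(5) unfolding sections_def by blast
  obtain g where g: "g \<notin> q" "Xr sM g \<subseteq> W"
    using zariski_open_basic[OF assms(1) W(1,2)] Q(2) by blast
  have "\<forall>p. prime_ideal p \<and> g \<notin> p \<longrightarrow> f \<notin> p \<and> s \<notin> p \<and> \<gamma> p = loc_class (- p) sN (m, s)"
  proof (intro allI impI)
    fix p assume p: "prime_ideal p \<and> g \<notin> p"
    obtain P where P: "P \<in> Spec sM" "colon sM P = p"
      using prime_ideal_is_colon[OF assms(1,3,4)] p by blast
    with p g(2) W(3) have "P \<in> W" "P \<in> Xr sM f" by (auto simp: Xr_eq[OF assms(1)])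
    then show "f \<notin> p \<and> s \<notin> p \<and> \<gamma> p = loc_class (- p) sN (m, s)"
      using on_W P(2) by (auto simp: Xr_eq[OF assms(1)])
  qed
  from is_frac_on_power_denominator[OF assms(2) this]
  obtain k a where "is_frac_on sN f \<gamma> (g ^ Suc k) a" by blast
  moreover have "g ^ Suc k \<notin> q" using g(1) assms(6) prime_ideal_power_notin by blast
  ultimately show ?thesis by blast
qed

lemma is_frac_on_compatible:
  assumes "module sN" and "is_frac_on sN f \<gamma> h a" "is_frac_on sN f \<gamma> k b"
  shows "\<exists>n. sN ((h * k) ^ n) (sN k a - sN h b) = 0"
proof (rule module.power_annihilates_if_locally_zero[OF assms(1)])
  fix p assume p: "prime_ideal p" "h * k \<notin> p"
  then have "h \<notin> p" "k \<notin> p" by (auto simp: prime_ideal_mult_iff)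
  with p(1) assms(2,3) have "loc_class (- p) sN (a, h) = loc_class (- p) sN (b, k)"
    unfolding is_frac_on_def by metis
  with \<open>h \<notin> p\<close> \<open>k \<notin> p\<close> have "loc_rel (- p) sN (a, h) (b, k)"
    using module.loc_class_eq_iff[OF assms(1) multiplicative_compl_prime[OF p(1)]] by auto
  then show "\<exists>t. t \<notin> p \<and> sN t (sN k a - sN h b) = 0" unfolding loc_rel_def by auto
qed

lemma is_frac_on_power:
  assumes "module sN" and "is_frac_on sN f \<gamma> h a"
  shows "is_frac_on sN f \<gamma> (h ^ Suc n) (sN (h ^ n) a)"
  unfolding is_frac_on_def
proof (intro allI impI)
  fix p assume p: "prime_ideal p \<and> h ^ Suc n \<notin> p"
  then have "h \<notin> p" using prime_ideal_power_Suc_iff by blast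
  with p assms(2) have "f \<notin> p" "\<gamma> p = loc_class (- p) sN (a, h)" unfolding is_frac_on_def by auto
  moreover have "loc_class (- p) sN (a, h) = loc_class (- p) sN (sN (h ^ n) a, h ^ Suc n)"
    using p \<open>h \<notin> p\<close>
    by (intro module.loc_class_eqI[OF assms(1) multiplicative_compl_prime]) (simp_all add: module.scale_scale[OF assms(1)])
  ultimately show "f \<notin> p \<and> \<gamma> p = loc_class (- p) sN (sN (h ^ n) a, h ^ Suc n)" by simp
qed

lemma is_frac_on_glue:
  assumes "module sN" and "finite T" and comb: "f ^ e = (\<Sum>i\<in>T. r i * v i)"
    and frac: "\<forall>i\<in>T. is_frac_on sN f \<gamma> (v i) (\<alpha> i)"
    and compat: "\<forall>i\<in>T. \<forall>j\<in>T. sN (v j) (\<alpha> i) = sN (v i) (\<alpha> j)"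
    and p: "prime_ideal p" "f \<notin> p"
  shows "\<gamma> p = loc_class (- p) sN (\<Sum>i\<in>T. sN (r i) (\<alpha> i), f ^ e)"
proof -
  interpret N: module sN by fact
  obtain i where i: "i \<in> T" "v i \<notin> p" using finite_combination_avoids_prime[OF comb p] by blast
  with frac p(1) have "\<gamma> p = loc_class (- p) sN (\<alpha> i, v i)" unfolding is_frac_on_def by blast
  also have "\<dots> = loc_class (- p) sN (\<Sum>j\<in>T. sN (r j) (\<alpha> j), f ^ e)"
  proof (rule N.loc_class_eqI[OF multiplicative_compl_prime[OF p(1)]])
    show "v i \<in> - p" "f ^ e \<in> - p" using i(2) prime_ideal_power_notin[OF p] by auto
    have "sN (f ^ e) (\<alpha> i) = (\<Sum>j\<in>T. sN (r j) (sN (v j) (\<alpha> i)))"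
      unfolding comb by (simp add: N.scale_sum_left)
    also have "\<dots> = (\<Sum>j\<in>T. sN (r j) (sN (v i) (\<alpha> j)))"
      using compat i(1) by (intro sum.cong) auto
    also have "\<dots> = sN (v i) (\<Sum>j\<in>T. sN (r j) (\<alpha> j))"
      by (simp add: N.scale_sum_right mult.commute)
    finally show "sN (f ^ e) (\<alpha> i) = sN (v i) (\<Sum>j\<in>T. sN (r j) (\<alpha> j))" .
  qed
  finally show ?thesis .
qed

lemma sections_eq_frac:
  fixes sN :: "'a::comm_ring_1 \<Rightarrow> 'n::ab_group_add \<Rightarrow> 'n"
  assumes "module sM" "module sN" "faithful sM" "primeful sM"
    and "\<gamma> \<in> sections sM sN (Xr sM f)"
  shows "\<exists>a e. \<forall>p. prime_ideal p \<and> f \<notin> p \<longrightarrow> \<gamma> p = loc_class (- p) sN (a, f ^ e)"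
proof -
  interpret N: module sN by fact
  define H where "H = {h. \<exists>a. is_frac_on sN f \<gamma> h a}"
  have "\<exists>h\<in>H. h \<notin> p" if "prime_ideal p" "f \<notin> p" for p
    using sections_locally_frac[OF assms that] unfolding H_def by blast
  from power_eq_finite_combination[where f = f and h = "\<lambda>h. h", OF this]
  obtain T r e where T: "finite T" "T \<subseteq> H" and comb: "f ^ e = (\<Sum>h\<in>T. r h * h)" by blast
  define A where "A h = (SOME a. is_frac_on sN f \<gamma> h a)" for h
  have A: "is_frac_on sN f \<gamma> h (A h)" if "h \<in> T" for h
    using that T(2) unfolding H_def A_def by (blast intro: someI)
  have "\<exists>n. \<forall>i\<in>T \<times> T.
      sN ((fst i * snd i) ^ n) (sN (snd i) (A (fst i)) - sN (fst i) (A (snd i))) = 0"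
    using T(1) is_frac_on_compatible[OF assms(2) A A] by (intro N.common_annihilating_power) auto
  then obtain n where n: "\<forall>i\<in>T \<times> T.
      sN ((fst i * snd i) ^ n) (sN (snd i) (A (fst i)) - sN (fst i) (A (snd i))) = 0"
    by blast
  \<comment> \<open>with the common exponent the compatibilities become exact identities\<close>
  define v where "v h = h ^ Suc n" for h :: 'a
  define \<alpha> where "\<alpha> h = sN (h ^ n) (A h)" for h
  have frac: "\<forall>h\<in>T. is_frac_on sN f \<gamma> (v h) (\<alpha> h)"
    using is_frac_on_power[OF assms(2) A] unfolding v_def \<alpha>_def by blast
  have compat: "\<forall>h\<in>T. \<forall>k\<in>T. sN (v k) (\<alpha> h) = sN (v h) (\<alpha> k)"
  proof (intro ballI)
    fix h k assume "h \<in> T" "k \<in> T"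
    have "sN (v k) (\<alpha> h) - sN (v h) (\<alpha> k) = sN ((h * k) ^ n) (sN k (A h) - sN h (A k))"
      unfolding v_def \<alpha>_def by (simp add: N.scale_right_diff_distrib power_mult_distrib mult_ac)
    also have "\<dots> = 0" using n \<open>h \<in> T\<close> \<open>k \<in> T\<close> by force
    finally show "sN (v k) (\<alpha> h) = sN (v h) (\<alpha> k)" by simp
  qed
  have "\<exists>h\<in>T. v h \<notin> p" if "prime_ideal p" "f \<notin> p" for p
    using finite_combination_avoids_prime[OF comb that] prime_ideal_power_notin[OF that(1)]
    unfolding v_def by blast
  from power_eq_finite_combination[where f = f and h = v, OF this]
  obtain S r' e' where S: "finite S" "S \<subseteq> T" and comb': "f ^ e' = (\<Sum>h\<in>S. r' h * v h)"
    by blast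
  have "\<gamma> p = loc_class (- p) sN (\<Sum>h\<in>S. sN (r' h) (\<alpha> h), f ^ e')"
    if "prime_ideal p" "f \<notin> p" for p
    using S(2) frac compat by (intro is_frac_on_glue[OF assms(2) S(1) comb' _ _ that]) blast+
  then show ?thesis by blast
qed

lemma germs_image:
  assumes "module sM" "module sN" "faithful sM" "primeful sM"
  shows "germs sN f ` loc_carrier (powers f) sN = sections sM sN (Xr sM f)"
proof
  show "germs sN f ` loc_carrier (powers f) sN \<subseteq> sections sM sN (Xr sM f)"
    using germs_in_sections[OF assms] by blast
  show "sections sM sN (Xr sM f) \<subseteq> germs sN f ` loc_carrier (powers f) sN"
  proof
    fix \<gamma> assume \<gamma>: "\<gamma> \<in> sections sM sN (Xr sM f)"
    then obtain a e where frac: "\<forall>p. prime_ideal p \<and> f \<notin> p \<longrightarrow> \<gamma> p = loc_class (- p) sN (a, f ^ e)"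
      using sections_eq_frac[OF assms] by blast
    have "\<gamma> p = {}" if "\<not> (prime_ideal p \<and> f \<notin> p)" for p
      using \<gamma> that unfolding sections_def Supp_Xr[OF assms(1,3,4)] by blast
    with frac have "\<gamma> = germs sN f (loc_class (powers f) sN (a, f ^ e))"
      by (auto simp: fun_eq_iff germs_class[OF assms(2)])
    moreover have "loc_class (powers f) sN (a, f ^ e) \<in> loc_carrier (powers f) sN"
      by (simp add: module.loc_class_in_carrier[OF assms(2)])
    ultimately show "\<gamma> \<in> germs sN f ` loc_carrier (powers f) sN" by blast
  qed
qed

lemma inv_into_preserves_unary:
  assumes "bij_betw g C S" "\<And>c. c \<in> C \<Longrightarrow> u c \<in> C"
    and "\<And>c. c \<in> C \<Longrightarrow> g (u c) = w (g c)" and "x \<in> S"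
  shows "inv_into C g (w x) = u (inv_into C g x)"
proof -
  have "inv_into C g x \<in> C" "g (inv_into C g x) = x"
    using assms(1,4) by (auto simp: bij_betw_def intro: inv_into_into f_inv_into_f)
  with assms(1-3) show ?thesis by (metis bij_betw_def inv_into_f_f)
qed

lemma inv_into_preserves_binary:
  assumes "bij_betw g C S" "\<And>c d. c \<in> C \<Longrightarrow> d \<in> C \<Longrightarrow> b c d \<in> C"
    and "\<And>c d. c \<in> C \<Longrightarrow> d \<in> C \<Longrightarrow> g (b c d) = w (g c) (g d)"
    and "x \<in> S" "y \<in> S"
  shows "inv_into C g (w x y) = b (inv_into C g x) (inv_into C g y)"
proof -
  have "inv_into C g x \<in> C" "g (inv_into C g x) = x" "inv_into C g y \<in> C" "g (inv_into C g y) = y"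
    using assms(1,4,5) by (auto simp: bij_betw_def intro: inv_into_into f_inv_into_f)
  with assms(1-3) show ?thesis by (metis bij_betw_def inv_into_f_f)
qed

theorem proposition3p20:
  fixes sM :: "'a::comm_ring_1 \<Rightarrow> 'm::ab_group_add \<Rightarrow> 'm"
    and sN :: "'a \<Rightarrow> 'n::ab_group_add \<Rightarrow> 'n"
    and f :: 'a
  assumes "module sM" and "module sN"
    and "faithful sM" and "primeful sM" and "Spec sM \<noteq> {}"
  shows "\<exists>\<phi>. bij_betw \<phi> (sections sM sN (Xr sM f)) (loc_carrier (powers f) sN) \<and>
     (\<forall>\<gamma>\<in>sections sM sN (Xr sM f). \<forall>\<delta>\<in>sections sM sN (Xr sM f).
        \<phi> (sect_add sM sN (Xr sM f) \<gamma> \<delta>) = loc_add (powers f) sN (\<phi> \<gamma>) (\<phi> \<delta>)) \<and>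
     (\<forall>r. \<forall>\<gamma>\<in>sections sM sN (Xr sM f).
        \<phi> (sect_scale sM sN (Xr sM f) r \<gamma>) = loc_scale (powers f) sN r (\<phi> \<gamma>))"
proof -
  let ?C = "loc_carrier (powers f) sN"
  have bij: "bij_betw (germs sN f) ?C (sections sM sN (Xr sM f))"
    using inj_on_germs[OF assms(2)] germs_image[OF assms(1-4)] by (rule bij_betw_imageI)
  show ?thesis
  proof (intro exI conjI ballI allI)
    show "bij_betw (inv_into ?C (germs sN f)) (sections sM sN (Xr sM f)) ?C"
      by (rule bij_betw_inv_into[OF bij])
    show "inv_into ?C (germs sN f) (sect_add sM sN (Xr sM f) \<gamma> \<delta>) =
        loc_add (powers f) sN (inv_into ?C (germs sN f) \<gamma>) (inv_into ?C (germs sN f) \<delta>)"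
      if "\<gamma> \<in> sections sM sN (Xr sM f)" "\<delta> \<in> sections sM sN (Xr sM f)" for \<gamma> \<delta>
      using bij germs_add(1,2)[OF assms(1-4)] that by (rule inv_into_preserves_binary)
    show "inv_into ?C (germs sN f) (sect_scale sM sN (Xr sM f) r \<gamma>) =
        loc_scale (powers f) sN r (inv_into ?C (germs sN f) \<gamma>)"
      if "\<gamma> \<in> sections sM sN (Xr sM f)" for r \<gamma>
      using bij germs_scale(1,2)[OF assms(1-4)] that by (rule inv_into_preserves_unary)
  qed
qed

end
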